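(* Let $G_{\lambda,k}$ be a skeleton of a connected graph $G$ with natural map $f$ and let $M=\min\{\lambda,k\}$. If two vertices $x,y\in G_{\lambda,k}$ satisfy $d(x,y)\ge N$, then their preimages $f^{-1}(x)$, $f^{-1}(y)$ in $G$ are $M(N-1)$-disjoint.
   Context: $d$ is the graph metric. Sets $X,Y$ are $r$-disjoint if $d(a,b)>r$ for all $a\in X,b\in Y$. A set $X$ is $k$-connected if any two of its points are joined by a finite sequence in $X$ with consecutive distances $\le k$. Skeleton $G_{\lambda,k}$ (root $x_0\in V(G)$, scale $\lambda\ge1$, connectivity $k\ge1$): layers $A_{N,\lambda}=\{x: N\lambda<d(x,x_0)\le(N+1)\lambda\}$, $N\in\mathbb Z$; blocks are the maximal $k$-connected subsets of layers; $G_{\lambda,k}$ has a vertex per block and an edge between two blocks iff an edge of $G$ joins them. The natural map $f$ sends each vertex of $G$ to its block. *)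

theory Defs
  imports Main
begin

definition graph :: "'a set \<Rightarrow> ('a \<Rightarrow> 'a \<Rightarrow> bool) \<Rightarrow> bool" where
  "graph V E \<longleftrightarrow> (\<forall>u v. E u v \<longrightarrow> u \<in> V \<and> v \<in> V \<and> E v u \<and> u \<noteq> v)"

definition adj :: "('a \<Rightarrow> 'a \<Rightarrow> bool) \<Rightarrow> ('a \<times> 'a) set" where
  "adj E = {(u, v). E u v}"

definition connected_graph :: "'a set \<Rightarrow> ('a \<Rightarrow> 'a \<Rightarrow> bool) \<Rightarrow> bool" where
  "connected_graph V E \<longleftrightarrow> graph V E \<and> V \<noteq> {} \<and>
     (\<forall>x\<in>V. \<forall>y\<in>V. (x, y) \<in> (adj E)\<^sup>*)"

definition gdist :: "('a \<Rightarrow> 'a \<Rightarrow> bool) \<Rightarrow> 'a \<Rightarrow> 'a \<Rightarrow> nat" where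
  "gdist E x y = (LEAST n. (x, y) \<in> (adj E) ^^ n)"

definition r_disjoint :: "('a \<Rightarrow> 'a \<Rightarrow> bool) \<Rightarrow> int \<Rightarrow> 'a set \<Rightarrow> 'a set \<Rightarrow> bool" where
  "r_disjoint E r X Y \<longleftrightarrow> (\<forall>a\<in>X. \<forall>b\<in>Y. int (gdist E a b) > r)"

definition k_connected :: "('a \<Rightarrow> 'a \<Rightarrow> bool) \<Rightarrow> nat \<Rightarrow> 'a set \<Rightarrow> bool" where
  "k_connected E k X \<longleftrightarrow>
     (\<forall>a\<in>X. \<forall>b\<in>X. (a, b) \<in> {(u, v). u \<in> X \<and> v \<in> X \<and> gdist E u v \<le> k}\<^sup>*)"

definition layer :: "'a set \<Rightarrow> ('a \<Rightarrow> 'a \<Rightarrow> bool) \<Rightarrow> 'a \<Rightarrow> nat \<Rightarrow> int \<Rightarrow> 'a set" where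
  "layer V E x0 lam N = {x \<in> V. N * int lam < int (gdist E x x0) \<and> int (gdist E x x0) \<le> (N + 1) * int lam}"

definition skel_block :: "'a set \<Rightarrow> ('a \<Rightarrow> 'a \<Rightarrow> bool) \<Rightarrow> 'a \<Rightarrow> nat \<Rightarrow> nat \<Rightarrow> 'a set \<Rightarrow> bool" where
  "skel_block V E x0 lam k B \<longleftrightarrow> (\<exists>N. B \<subseteq> layer V E x0 lam N \<and> B \<noteq> {} \<and> k_connected E k B \<and>
     (\<forall>C. B \<subseteq> C \<and> C \<subseteq> layer V E x0 lam N \<and> k_connected E k C \<longrightarrow> C = B))"

definition skel_vertices :: "'a set \<Rightarrow> ('a \<Rightarrow> 'a \<Rightarrow> bool) \<Rightarrow> 'a \<Rightarrow> nat \<Rightarrow> nat \<Rightarrow> 'a set set" where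
  "skel_vertices V E x0 lam k = {B. skel_block V E x0 lam k B}"

definition skel_edge :: "'a set \<Rightarrow> ('a \<Rightarrow> 'a \<Rightarrow> bool) \<Rightarrow> 'a \<Rightarrow> nat \<Rightarrow> nat \<Rightarrow> 'a set \<Rightarrow> 'a set \<Rightarrow> bool" where
  "skel_edge V E x0 lam k B B' \<longleftrightarrow> skel_block V E x0 lam k B \<and> skel_block V E x0 lam k B' \<and>
     B \<noteq> B' \<and> (\<exists>u\<in>B. \<exists>v\<in>B'. E u v)"

definition skel_map :: "'a set \<Rightarrow> ('a \<Rightarrow> 'a \<Rightarrow> bool) \<Rightarrow> 'a \<Rightarrow> nat \<Rightarrow> nat \<Rightarrow> 'a \<Rightarrow> 'a set" where
  "skel_map V E x0 lam k v = (THE B. skel_block V E x0 lam k B \<and> v \<in> B)"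

end

theory Submission
  imports Defs
begin

(* Let M = min lam k. Vertices u, w of G at distance at most M are sent by f to equal or adjacent
   blocks. Since M \<le> lam their levels differ by at most one. On a common level they lie in one
   block, because M \<le> k. Otherwise a shortest path from u to w crosses from the lower to the
   upper level along an edge pq; then p shares the block of u, q shares the block of w, and the
   edge pq joins the two blocks. Cutting a path of length at most M(N - 1) into N - 1 pieces of
   length at most M shows that f maps such points to blocks at distance at most N - 1. *)

lemma mem_adj_iff [simp]: "(x, y) \<in> adj E \<longleftrightarrow> E x y"
  by (simp add: adj_def)

lemma gdist_le_walk: "(x, y) \<in> (adj E) ^^ n \<Longrightarrow> gdist E x y \<le> n"
  unfolding gdist_def by (rule Least_le)

lemma walk_gdist: "(x, y) \<in> (adj E)\<^sup>* \<Longrightarrow> (x, y) \<in> (adj E) ^^ gdist E x y"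
  unfolding gdist_def by (metis LeastI rtrancl_power)

lemma gdist_self [simp]: "gdist E x x = 0"
  using gdist_le_walk[where n = 0 and x = x and y = x] by simp

lemma gdist_triangle:
  assumes "(x, y) \<in> (adj E)\<^sup>*" and "(y, z) \<in> (adj E)\<^sup>*"
  shows "gdist E x z \<le> gdist E x y + gdist E y z"
  using relpow_trans[OF walk_gdist[OF assms(1)] walk_gdist[OF assms(2)]] by (rule gdist_le_walk)

lemma graph_walk_sym:
  assumes "graph V E"
  shows "(x, y) \<in> (adj E) ^^ n \<Longrightarrow> (y, x) \<in> (adj E) ^^ n"
proof (induction n arbitrary: y)
  case (Suc n)
  then obtain z where "(x, z) \<in> (adj E) ^^ n" and "E z y" by auto
  then have "(z, x) \<in> (adj E) ^^ n" and "E y z"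
    using Suc.IH assms by (auto simp: graph_def)
  then show ?case by (intro relpow_Suc_I2[where y = z]) simp_all
qed simp

lemma gdist_commute: "graph V E \<Longrightarrow> gdist E x y = gdist E y x"
  unfolding gdist_def by (metis graph_walk_sym)

lemma graph_reachable_closed:
  assumes "graph V E"
  shows "(a, c) \<in> (adj E)\<^sup>* \<Longrightarrow> a \<in> V \<Longrightarrow> c \<in> V"
  by (induction rule: rtrancl_induct) (use assms in \<open>auto simp: graph_def\<close>)

lemma walk_crosses_threshold:
  fixes h :: "'a \<Rightarrow> int"
  shows "(u, w) \<in> (adj E) ^^ n \<Longrightarrow> h u \<le> L \<Longrightarrow> L < h w \<Longrightarrow>
    \<exists>p q i j. (u, p) \<in> (adj E) ^^ i \<and> i \<le> n \<and> (q, w) \<in> (adj E) ^^ j \<and> j \<le> n \<and>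
      E p q \<and> h p \<le> L \<and> L < h q"
proof (induction n arbitrary: u)
  case (Suc n)
  then obtain v where "(u, v) \<in> adj E" and vw: "(v, w) \<in> (adj E) ^^ n"
    by (blast elim: relpow_Suc_E2)
  then have uv: "E u v" by simp
  show ?case
  proof (cases "L < h v")
    case True
    then show ?thesis
      using uv vw Suc.prems by (intro exI[of _ u] exI[of _ v] exI[of _ 0] exI[of _ n]) auto
  next
    case False
    then obtain p q i j where "(v, p) \<in> (adj E) ^^ i" "i \<le> n" "(q, w) \<in> (adj E) ^^ j" "j \<le> n"
        "E p q" "h p \<le> L" "L < h q"
      using Suc.IH[OF vw] Suc.prems by force
    moreover from uv \<open>(v, p) \<in> (adj E) ^^ i\<close> have "(u, p) \<in> (adj E) ^^ Suc i"
      by (intro relpow_Suc_I2[where y = v]) simp_all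
    ultimately show ?thesis by (intro exI[of _ p] exI[of _ q] exI[of _ "Suc i"] exI[of _ j]) auto
  qed
qed simp

lemma walk_image_bound:
  assumes "graph V E"
    and near: "\<And>u w. u \<in> V \<Longrightarrow> w \<in> V \<Longrightarrow> gdist E u w \<le> M \<Longrightarrow> g u = g w \<or> E' (g u) (g w)"
  shows "a \<in> V \<Longrightarrow> (a, b) \<in> (adj E) ^^ m \<Longrightarrow> m \<le> M * n \<Longrightarrow>
    \<exists>j\<le>n. (g a, g b) \<in> (adj E') ^^ j"
proof (induction n arbitrary: a m)
  case 0
  then show ?case by (intro exI[of _ 0]) auto
next
  case (Suc n)
  let ?s = "min M m"
  have "(a, b) \<in> (adj E) ^^ ?s O (adj E) ^^ (m - ?s)"
    using Suc.prems(2) by (simp flip: relpow_add)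
  then obtain c where ac: "(a, c) \<in> (adj E) ^^ ?s" and cb: "(c, b) \<in> (adj E) ^^ (m - ?s)"
    by blast
  have cV: "c \<in> V"
    using graph_reachable_closed[OF assms(1) relpow_imp_rtrancl[OF ac] Suc.prems(1)] .
  obtain j where "j \<le> n" and j: "(g c, g b) \<in> (adj E') ^^ j"
    using Suc.IH[OF cV cb] Suc.prems(3) by fastforce
  have "gdist E a c \<le> M"
    using gdist_le_walk[OF ac] by simp
  then consider "g a = g c" | "E' (g a) (g c)"
    using near Suc.prems(1) cV by blast
  then show ?case
  proof cases
    case 1
    then show ?thesis using \<open>j \<le> n\<close> j by (intro exI[of _ j]) auto
  next
    case 2
    then have "(g a, g b) \<in> (adj E') ^^ Suc j" using j by (intro relpow_Suc_I2[where y = "g c"]) simp_all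
    then show ?thesis using \<open>j \<le> n\<close> by (intro exI[of _ "Suc j"]) auto
  qed
qed

definition k_steps :: "('a \<Rightarrow> 'a \<Rightarrow> bool) \<Rightarrow> nat \<Rightarrow> 'a set \<Rightarrow> 'a rel" where
  "k_steps E k X = {(u, v). u \<in> X \<and> v \<in> X \<and> gdist E u v \<le> k}"

lemma k_connected_iff_k_steps:
  "k_connected E k X \<longleftrightarrow> (\<forall>a\<in>X. \<forall>b\<in>X. (a, b) \<in> (k_steps E k X)\<^sup>*)"
  by (simp add: k_connected_def k_steps_def)

lemma k_steps_mono: "X \<subseteq> Y \<Longrightarrow> k_steps E k X \<subseteq> k_steps E k Y"
  by (auto simp: k_steps_def)

lemma k_connected_Union:
  assumes "\<And>A. A \<in> \<A> \<Longrightarrow> k_connected E k A \<and> x \<in> A"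
  shows "k_connected E k (\<Union>\<A>)"
  unfolding k_connected_iff_k_steps
proof (intro ballI)
  fix a b assume "a \<in> \<Union>\<A>" and "b \<in> \<Union>\<A>"
  then obtain A B where "A \<in> \<A>" "a \<in> A" "B \<in> \<A>" "b \<in> B" by blast
  have "(a, x) \<in> (k_steps E k A)\<^sup>*" and "(x, b) \<in> (k_steps E k B)\<^sup>*"
    using assms \<open>A \<in> \<A>\<close> \<open>a \<in> A\<close> \<open>B \<in> \<A>\<close> \<open>b \<in> B\<close> by (auto simp: k_connected_iff_k_steps)
  moreover have "k_steps E k A \<subseteq> k_steps E k (\<Union>\<A>)" and "k_steps E k B \<subseteq> k_steps E k (\<Union>\<A>)"
    using \<open>A \<in> \<A>\<close> \<open>B \<in> \<A>\<close> by (simp_all add: Union_upper k_steps_mono)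
  ultimately show "(a, b) \<in> (k_steps E k (\<Union>\<A>))\<^sup>*"
    by (meson rtrancl_mono rtrancl_trans subsetD)
qed

lemma k_connected_doubleton:
  assumes "graph V E" and "gdist E x y \<le> k"
  shows "k_connected E k {x, y}"
  using assms gdist_commute[OF assms(1), of x y]
  by (auto simp: k_connected_iff_k_steps k_steps_def intro: r_into_rtrancl)

lemma int_div_eq_iff:
  fixes a b q :: int
  assumes "0 < b"
  shows "a div b = q \<longleftrightarrow> q * b \<le> a \<and> a < (q + 1) * b"
proof
  assume "a div b = q"
  moreover have "a div b * b + a mod b = a" by (rule div_mult_mod_eq)
  moreover have "0 \<le> a mod b" and "a mod b < b" using assms by simp_all
  ultimately show "q * b \<le> a \<and> a < (q + 1) * b" by (auto simp: algebra_simps)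
next
  assume "q * b \<le> a \<and> a < (q + 1) * b"
  then show "a div b = q" by (intro int_div_pos_eq[where r = "a - b * q"]) (auto simp: algebra_simps)
qed

locale skeleton =
  fixes V :: "'a set" and E :: "'a \<Rightarrow> 'a \<Rightarrow> bool" and x0 :: 'a and lam k :: nat
  assumes connected: "connected_graph V E" and root: "x0 \<in> V" and scale_pos: "lam \<ge> 1"
begin

lemma graph: "graph V E"
  using connected by (simp add: connected_graph_def)

lemma reachable: "x \<in> V \<Longrightarrow> y \<in> V \<Longrightarrow> (x, y) \<in> (adj E)\<^sup>*"
  using connected by (simp add: connected_graph_def)

abbreviation block :: "'a set \<Rightarrow> bool" where
  "block \<equiv> skel_block V E x0 lam k"

abbreviation f :: "'a \<Rightarrow> 'a set" where
  "f \<equiv> skel_map V E x0 lam k"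

abbreviation skel_adj :: "'a set \<Rightarrow> 'a set \<Rightarrow> bool" where
  "skel_adj \<equiv> skel_edge V E x0 lam k"

(* The root has distance 0 and lies in layer -1, so the subtraction must happen in int. *)
definition level :: "'a \<Rightarrow> int" where
  "level x = (int (gdist E x x0) - 1) div int lam"

lemma mem_layer_iff: "x \<in> layer V E x0 lam N \<longleftrightarrow> x \<in> V \<and> level x = N"
proof -
  have "level x = N \<longleftrightarrow>
      N * int lam \<le> int (gdist E x x0) - 1 \<and> int (gdist E x x0) - 1 < (N + 1) * int lam"
    unfolding level_def using scale_pos by (intro int_div_eq_iff) simp
  then show ?thesis unfolding layer_def by auto
qed

lemma level_le_Suc:
  assumes "u \<in> V" "w \<in> V" "gdist E u w \<le> lam"
  shows "level w \<le> level u + 1"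
proof -
  have "gdist E w x0 \<le> gdist E w u + gdist E u x0"
    using assms root by (intro gdist_triangle reachable)
  then have "int (gdist E w x0) - 1 \<le> (int (gdist E u x0) - 1) + int lam"
    using assms(3) gdist_commute[OF graph, of w u] by linarith
  then have "level w \<le> (int (gdist E u x0) - 1 + int lam) div int lam"
    unfolding level_def by (rule zdiv_mono1) (use scale_pos in simp)
  also have "\<dots> = level u + 1"
    unfolding level_def using scale_pos by (simp add: div_add_self2)
  finally show ?thesis .
qed

lemma level_edge:
  assumes "E p q"
  shows "level q \<le> level p + 1"
proof (rule level_le_Suc)
  show "p \<in> V" and "q \<in> V" using graph assms by (auto simp: graph_def)
  show "gdist E p q \<le> lam"
    using gdist_le_walk[where n = 1 and x = p and y = q and E = E] assms scale_pos by simp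
qed

lemma blockE:
  assumes "block B" and "x \<in> B"
  obtains "x \<in> V" and "B \<subseteq> layer V E x0 lam (level x)" and "k_connected E k B"
    and "\<And>C. B \<subseteq> C \<Longrightarrow> C \<subseteq> layer V E x0 lam (level x) \<Longrightarrow> k_connected E k C \<Longrightarrow> C = B"
proof -
  obtain N where N: "B \<subseteq> layer V E x0 lam N" "k_connected E k B"
      "\<forall>C. B \<subseteq> C \<and> C \<subseteq> layer V E x0 lam N \<and> k_connected E k C \<longrightarrow> C = B"
    using assms(1) unfolding skel_block_def by (elim exE conjE) simp
  moreover have "x \<in> V" and "N = level x"
    using N(1) assms(2) mem_layer_iff by auto
  ultimately show ?thesis by (intro that) auto
qed

lemma block_unique:
  assumes "block B1" "block B2" "x \<in> B1" "x \<in> B2"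
  shows "B1 = B2"
proof -
  obtain "x \<in> V" "B1 \<subseteq> layer V E x0 lam (level x)" "k_connected E k B1"
      and max1: "\<And>C. B1 \<subseteq> C \<Longrightarrow> C \<subseteq> layer V E x0 lam (level x) \<Longrightarrow> k_connected E k C \<Longrightarrow> C = B1"
    using assms(1,3) by (rule blockE) (rule that)
  moreover obtain "x \<in> V" "B2 \<subseteq> layer V E x0 lam (level x)" "k_connected E k B2"
      and max2: "\<And>C. B2 \<subseteq> C \<Longrightarrow> C \<subseteq> layer V E x0 lam (level x) \<Longrightarrow> k_connected E k C \<Longrightarrow> C = B2"
    using assms(2,4) by (rule blockE) (rule that)
  moreover have "k_connected E k (\<Union>{B1, B2})"
    by (rule k_connected_Union[where x = x]) (use assms calculation in auto)
  ultimately have "B1 \<union> B2 = B1" and "B1 \<union> B2 = B2"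
    using max1[of "B1 \<union> B2"] max2[of "B1 \<union> B2"] by auto
  then show ?thesis by simp
qed

lemma block_exists:
  assumes "x \<in> V"
  shows "\<exists>B. block B \<and> x \<in> B"
proof -
  define L where "L = layer V E x0 lam (level x)"
  define K where "K = \<Union>{C. C \<subseteq> L \<and> k_connected E k C \<and> x \<in> C}"
  have "{x} \<subseteq> L" and "k_connected E k {x}"
    using assms by (simp_all add: L_def mem_layer_iff k_connected_def)
  then have "x \<in> K" unfolding K_def by blast
  moreover have "k_connected E k K"
    unfolding K_def by (rule k_connected_Union[where x = x]) blast
  moreover have "K \<subseteq> L" and "\<And>C. K \<subseteq> C \<Longrightarrow> C \<subseteq> L \<Longrightarrow> k_connected E k C \<Longrightarrow> C = K"
    using \<open>x \<in> K\<close> unfolding K_def by blast+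
  ultimately have "block K"
    unfolding skel_block_def L_def by blast
  with \<open>x \<in> K\<close> show ?thesis by blast
qed

lemma skel_map_block: "x \<in> V \<Longrightarrow> block (f x) \<and> x \<in> f x"
  unfolding skel_map_def using block_exists block_unique by (metis (mono_tags, lifting) theI)

lemma skel_map_eqI: "block B \<Longrightarrow> x \<in> B \<Longrightarrow> f x = B"
  using skel_map_block block_unique by (meson blockE)

lemma skel_map_eq_if_level_eq:
  assumes "x \<in> V" "y \<in> V" "level x = level y" "gdist E x y \<le> k"
  shows "f x = f y"
proof -
  have B: "block (f x)" "x \<in> f x" using skel_map_block[OF assms(1)] by auto
  then obtain "x \<in> V" and L: "f x \<subseteq> layer V E x0 lam (level x)" and "k_connected E k (f x)"
    and max: "\<And>C. f x \<subseteq> C \<Longrightarrow> C \<subseteq> layer V E x0 lam (level x) \<Longrightarrow> k_connected E k C \<Longrightarrow> C = f x"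
    by (rule blockE) (rule that)
  moreover have "k_connected E k (\<Union>{f x, {x, y}})"
    by (rule k_connected_Union[where x = x])
      (use B calculation k_connected_doubleton[OF graph assms(4)] in auto)
  moreover have "f x \<union> {x, y} \<subseteq> layer V E x0 lam (level x)"
    using L assms by (simp add: mem_layer_iff)
  ultimately have "f x \<union> {x, y} = f x" by (intro max) auto
  then have "y \<in> f x" by blast
  then show ?thesis using skel_map_eqI[OF B(1)] by simp
qed

lemma skel_adj_if_level_less:
  assumes uV: "u \<in> V" and wV: "w \<in> V" and near: "gdist E u w \<le> min lam k"
    and less: "level u < level w"
  shows "skel_adj (f u) (f w)"
proof -
  obtain p q i j where up: "(u, p) \<in> (adj E) ^^ i" "i \<le> gdist E u w"
      and qw: "(q, w) \<in> (adj E) ^^ j" "j \<le> gdist E u w"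
      and pq: "E p q" "level p \<le> level u" "level u < level q"
    using walk_crosses_threshold[OF walk_gdist[OF reachable[OF uV wV]] order.refl less] by blast
  have pV: "p \<in> V" and qV: "q \<in> V" using graph pq(1) by (auto simp: graph_def)
  have "level w \<le> level u + 1" using level_le_Suc[OF uV wV] near by simp
  moreover have "level q \<le> level p + 1" using level_edge[OF pq(1)] .
  ultimately have "level p = level u" and "level q = level w" using pq(2,3) less by auto
  moreover have "gdist E u p \<le> k" and "gdist E q w \<le> k"
    using gdist_le_walk[OF up(1)] gdist_le_walk[OF qw(1)] up(2) qw(2) near by auto
  ultimately have "f u = f p" and "f q = f w"
    using skel_map_eq_if_level_eq[OF uV pV] skel_map_eq_if_level_eq[OF qV wV] by simp_all
  then have "p \<in> f u" and "q \<in> f w"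
    using skel_map_block[OF pV] skel_map_block[OF qV] by simp_all
  moreover have "f u \<noteq> f w"
  proof
    assume "f u = f w"
    then have "w \<in> f u" using skel_map_block[OF wV] by simp
    then have "f u \<subseteq> layer V E x0 lam (level w)"
      using skel_map_block[OF uV] by (auto elim: blockE[where x = w])
    then have "u \<in> layer V E x0 lam (level w)" using skel_map_block[OF uV] by auto
    then show False using less by (simp add: mem_layer_iff)
  qed
  ultimately show ?thesis
    using skel_map_block[OF uV] skel_map_block[OF wV] pq(1) unfolding skel_edge_def by blast
qed

lemma skel_map_eq_or_adj:
  assumes "u \<in> V" "w \<in> V" "gdist E u w \<le> min lam k"
  shows "f u = f w \<or> skel_adj (f u) (f w)"
proof -
  have "gdist E w u \<le> min lam k" using assms(3) gdist_commute[OF graph] by metis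
  consider "level u = level w" | "level u < level w" | "level w < level u" by linarith
  then show ?thesis
  proof cases
    case 1
    then show ?thesis using skel_map_eq_if_level_eq[OF assms(1,2) 1] assms(3) by simp
  next
    case 2
    then show ?thesis using skel_adj_if_level_less[OF assms 2] by simp
  next
    case 3
    then have "skel_adj (f w) (f u)"
      using skel_adj_if_level_less[OF assms(2,1) \<open>gdist E w u \<le> min lam k\<close>] by simp
    then show ?thesis using graph unfolding skel_edge_def graph_def by blast
  qed
qed

lemma gdist_skel_map_le:
  assumes "a \<in> V" "b \<in> V" "gdist E a b \<le> min lam k * n"
  shows "gdist skel_adj (f a) (f b) \<le> n"
proof -
  obtain j where "j \<le> n" "(f a, f b) \<in> (adj skel_adj) ^^ j"
    using walk_image_bound[where g = f and E' = skel_adj, OF graph skel_map_eq_or_adj assms(1)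
        walk_gdist[OF reachable[OF assms(1,2)]] assms(3)]
    by blast
  then show ?thesis using gdist_le_walk by fastforce
qed

end

theorem corollary9:
  fixes V :: "'a set" and E :: "'a \<Rightarrow> 'a \<Rightarrow> bool" and x0 :: 'a
    and lam k N :: nat and X Y :: "'a set"
  assumes "connected_graph V E"
    and "x0 \<in> V"
    and "lam \<ge> 1" and "k \<ge> 1"
    and "X \<in> skel_vertices V E x0 lam k" and "Y \<in> skel_vertices V E x0 lam k"
    and "gdist (skel_edge V E x0 lam k) X Y \<ge> N"
  shows "r_disjoint E (int (min lam k) * (int N - 1))
           {v \<in> V. skel_map V E x0 lam k v = X} {v \<in> V. skel_map V E x0 lam k v = Y}"
  unfolding r_disjoint_def
proof (intro ballI)
  interpret skeleton V E x0 lam k using assms by unfold_locales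
  fix a b assume a: "a \<in> {v \<in> V. f v = X}" and b: "b \<in> {v \<in> V. f v = Y}"
  show "int (gdist E a b) > int (min lam k) * (int N - 1)"
  proof (cases "N = 0")
    case True
    then show ?thesis using assms(3,4) by simp
  next
    case False
    have "\<not> gdist E a b \<le> min lam k * (N - 1)"
      using gdist_skel_map_le[of a b "N - 1"] a b False assms(7) by auto
    moreover have "int (min lam k * (N - 1)) = int (min lam k) * (int N - 1)"
      using False by (simp add: of_nat_diff)
    ultimately show ?thesis by linarith
  qed
qed

end
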